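(* Let $\mathbf{k}$ be a field. Every connected graded left counital $\mathbf{k}$-bialgebra $(H,m,\mu,\Delta,\varepsilon)$ is a left counital Hopf algebra, i.e. it admits a right antipode $S$ with $\mathrm{id}_H\ast S=\mu\varepsilon$. Such an $S$ is given by the recursion $S(1_H)=1_H$ and, for homogeneous $x\in H^{(n)}$, $n\ge1$, $S(x)=-\sum_{(x)}x'S(x'')$, where $\tilde\Delta(x)=\Delta(x)-1\otimes x=\sum_{(x)}x'\otimes x''$ (Sweedler notation), extended linearly.
   Context: All algebras are unital commutative over $\mathbf{k}$. A left counital bialgebra $(H,m,\mu,\Delta,\varepsilon)$ is an algebra $H$ with unit map $\mu$ and algebra homomorphisms $\Delta:H\to H\otimes H$ (coassociative) and $\varepsilon:H\to\mathbf{k}$ with $(\varepsilon\otimes\mathrm{id})\Delta=\beta_\ell$, $\beta_\ell(u)=1\otimes u$ (right counicity not required). It is graded if $H=\bigoplus_{n\ge0}H^{(n)}$ for submodules with $H^{(p)}H^{(q)}\subseteq H^{(p+q)}$ and $\Delta(H^{(n)})\subseteq (H^{(0)}\otimes H^{(n)})\oplus\bigoplus_{p+q=n,\,p,q>0}H^{(p)}\otimes H^{(q)}$ for all $n$; connected if moreover $H^{(0)}=\mathrm{im}\,\mu=\mathbf{k}1_H$ and $\ker\varepsilon=\bigoplus_{n\ge1}H^{(n)}$. The convolution of $f,g\in\mathrm{End}_{\mathbf{k}}(H)$ is $f\ast g=m(f\otimes g)\Delta$. A right antipode is a linear $S:H\to H$ with $\mathrm{id}_H\ast S=\mu\varepsilon$;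 a left counital bialgebra with a right antipode is called a left counital (right antipode) Hopf algebra. *)

theory Defs
  imports Complex_Main
begin

(* Tensor powers H^{\<otimes>n} are modelled literally: the free k-vector space on words
   (lists) of elements of H, modulo the subspace generated by the multilinearity
   relations in every position.  A formal sum of words is given by a list of words. *)

definition tdelta :: "'h list \<Rightarrow> 'h list \<Rightarrow> 'k::field" where
  "tdelta w = (\<lambda>v. if v = w then 1 else 0)"

inductive_set tnull :: "('k::field \<Rightarrow> 'h::ab_group_add \<Rightarrow> 'h) \<Rightarrow> ('h list \<Rightarrow> 'k) set"
  for sc :: "'k::field \<Rightarrow> 'h::ab_group_add \<Rightarrow> 'h" where
  tnull_zero: "(\<lambda>v. 0) \<in> tnull sc"
| tnull_add: "f \<in> tnull sc \<Longrightarrow> g \<in> tnull sc \<Longrightarrow> (\<lambda>v. f v + g v) \<in> tnull sc"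
| tnull_smult: "f \<in> tnull sc \<Longrightarrow> (\<lambda>v. c * f v) \<in> tnull sc"
| tnull_additive: "(\<lambda>v. tdelta (u @ (a + b) # w) v - tdelta (u @ a # w) v - tdelta (u @ b # w) v)
      \<in> tnull sc"
| tnull_homog: "(\<lambda>v. tdelta (u @ sc c a # w) v - c * tdelta (u @ a # w) v) \<in> tnull sc"

definition formal_sum :: "'h list list \<Rightarrow> 'h list \<Rightarrow> 'k::field" where
  "formal_sum ws = (\<lambda>v. sum_list (map (\<lambda>w. tdelta w v) ws))"

definition tensor_eq :: "('k::field \<Rightarrow> 'h::ab_group_add \<Rightarrow> 'h) \<Rightarrow> 'h list list \<Rightarrow> 'h list list \<Rightarrow> bool" where
  "tensor_eq sc ws ws' \<longleftrightarrow> (\<lambda>v. formal_sum ws v - (formal_sum ws' v :: 'k)) \<in> tnull sc"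

text \<open>A list of pairs (a,b) represents the element sum of a \<otimes> b of H \<otimes> H.\<close>
definition pairs2 :: "('h \<times> 'h) list \<Rightarrow> 'h list list" where
  "pairs2 xs = map (\<lambda>(a, b). [a, b]) xs"

text \<open>H is a commutative k-algebra: ring structure of type 'h, scalar action sc,
  unit map c \<mapsto> sc c 1.  The coproduct is given by a representative list of pairs.\<close>
definition left_counital_bialgebra ::
  "('k::field \<Rightarrow> 'h::comm_ring_1 \<Rightarrow> 'h) \<Rightarrow> ('h \<Rightarrow> ('h \<times> 'h) list) \<Rightarrow> ('h \<Rightarrow> 'k) \<Rightarrow> bool" where
  "left_counital_bialgebra sc \<Delta> \<epsilon> \<longleftrightarrow>
     Vector_Spaces.vector_space sc
   \<and> (\<forall>c x y. sc c (x * y) = sc c x * y) \<and> (\<forall>c x y. sc c (x * y) = x * sc c y)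
   \<and> (\<forall>x y. \<epsilon> (x + y) = \<epsilon> x + \<epsilon> y) \<and> (\<forall>c x. \<epsilon> (sc c x) = c * \<epsilon> x)
   \<and> (\<forall>x y. \<epsilon> (x * y) = \<epsilon> x * \<epsilon> y) \<and> \<epsilon> 1 = 1
   \<and> (\<forall>x y. tensor_eq sc (pairs2 (\<Delta> (x + y))) (pairs2 (\<Delta> x @ \<Delta> y)))
   \<and> (\<forall>c x. tensor_eq sc (pairs2 (\<Delta> (sc c x))) (pairs2 (map (\<lambda>(a, b). (sc c a, b)) (\<Delta> x))))
   \<and> (\<forall>x y. tensor_eq sc (pairs2 (\<Delta> (x * y)))
                       (pairs2 [(a * a', b * b'). (a, b) \<leftarrow> \<Delta> x, (a', b') \<leftarrow> \<Delta> y]))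
   \<and> tensor_eq sc (pairs2 (\<Delta> 1)) (pairs2 [(1, 1)])
   \<and> (\<forall>x. tensor_eq sc [[a1, a2, b]. (a, b) \<leftarrow> \<Delta> x, (a1, a2) \<leftarrow> \<Delta> a]
                       [[a, b1, b2]. (a, b) \<leftarrow> \<Delta> x, (b1, b2) \<leftarrow> \<Delta> b])
   \<and> (\<forall>x. sum_list (map (\<lambda>(a, b). sc (\<epsilon> a) b) (\<Delta> x)) = x)"

definition graded_bialgebra ::
  "('k::field \<Rightarrow> 'h::comm_ring_1 \<Rightarrow> 'h) \<Rightarrow> ('h \<Rightarrow> ('h \<times> 'h) list) \<Rightarrow> (nat \<Rightarrow> 'h set) \<Rightarrow> bool" where
  "graded_bialgebra sc \<Delta> Hn \<longleftrightarrow>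
     (\<forall>n. Modules.module.subspace sc (Hn n))
   \<and> (\<forall>x. \<exists>!f :: nat \<Rightarrow> 'h. (\<forall>n. f n \<in> Hn n) \<and> (\<exists>N. (\<forall>n\<ge>N. f n = 0) \<and> x = sum f {..<N}))
   \<and> (\<forall>p q x y. x \<in> Hn p \<longrightarrow> y \<in> Hn q \<longrightarrow> x * y \<in> Hn (p + q))
   \<and> (\<forall>n x. x \<in> Hn n \<longrightarrow>
        (\<exists>ys. tensor_eq sc (pairs2 (\<Delta> x)) (pairs2 ys)
             \<and> (\<forall>(a, b) \<in> set ys. (a \<in> Hn 0 \<and> b \<in> Hn n)
                   \<or> (\<exists>p q. 0 < p \<and> 0 < q \<and> p + q = n \<and> a \<in> Hn p \<and> b \<in> Hn q))))"

definition connected_graded_bialgebra ::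
  "('k::field \<Rightarrow> 'h::comm_ring_1 \<Rightarrow> 'h) \<Rightarrow> ('h \<Rightarrow> ('h \<times> 'h) list) \<Rightarrow> ('h \<Rightarrow> 'k) \<Rightarrow> (nat \<Rightarrow> 'h set) \<Rightarrow> bool" where
  "connected_graded_bialgebra sc \<Delta> \<epsilon> Hn \<longleftrightarrow>
     graded_bialgebra sc \<Delta> Hn
   \<and> Hn 0 = range (\<lambda>c. sc c 1)
   \<and> {x. \<epsilon> x = 0} = {x. \<exists>N f. (\<forall>n. f n \<in> Hn (Suc n)) \<and> x = sum f {..<N}}"

text \<open>Convolution f * g = m (f \<otimes> g) \<Delta>, computed on the representative of \<Delta> x
  (well defined for linear f, g).\<close>
definition convolution :: "('h \<Rightarrow> ('h \<times> 'h) list) \<Rightarrow> ('h \<Rightarrow> 'h::comm_ring_1) \<Rightarrow> ('h \<Rightarrow> 'h) \<Rightarrow> 'h \<Rightarrow> 'h" where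
  "convolution \<Delta> f g x = sum_list (map (\<lambda>(a, b). f a * g b) (\<Delta> x))"

end

theory Submission
  imports Defs
begin

text \<open>
  For homogeneous \<open>y\<close> of positive degree \<open>j\<close>, the grading of \<open>\<Delta>\<close> together with left
  counitality (elements of degree 0 are scalars, \<open>\<epsilon>\<close> vanishes in positive degrees) gives
  \<open>\<Delta> y = 1 \<otimes> y + \<Sum> y' \<otimes> y''\<close> with every \<open>y''\<close> of degree \<open>< j\<close>. So the equation
  \<open>id \<star> S = \<mu>\<epsilon>\<close> can be solved one degree at a time by \<open>S y = - \<Sum> y' S(y'')\<close>: the maps
  \<open>antipode_upto n\<close> solve it in degrees \<open>\<le> n\<close>, they stabilise on every element, and their
  limit is a linear right antipode. Since \<open>\<Delta>\<close> is only known up to the multilinearity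
  relations of the tensor square, every computation with \<open>\<Delta>\<close> is done through bilinear maps,
  which respect these relations.
\<close>

text \<open>A fresh copy of \<open>vector_space\<close>: definitions made in \<open>vector_space\<close> itself would
  also be generated, unqualified, for its global interpretation on real vector spaces.\<close>

locale word_evaluation = vector_space scale
  for scale :: "'a::field \<Rightarrow> 'b::ab_group_add \<Rightarrow> 'b" (infixr \<open>*s\<close> 75)
begin

definition bilinear_map :: "('b \<Rightarrow> 'b \<Rightarrow> 'b) \<Rightarrow> bool" where
  "bilinear_map B \<longleftrightarrow>
     (\<forall>a a' b. B (a + a') b = B a b + B a' b) \<and> (\<forall>c a b. B (c *s a) b = c *s B a b)
   \<and> (\<forall>a b b'. B a (b + b') = B a b + B a b') \<and> (\<forall>c a b. B a (c *s b) = c *s B a b)"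

lemma bilinear_mapD:
  assumes "bilinear_map B"
  shows "B (a + a') b = B a b + B a' b" and "B (c *s a) b = c *s B a b"
    and "B a (b + b') = B a b + B a b'" and "B a (c *s b) = c *s B a b"
  using assms unfolding bilinear_map_def by blast+

lemma bilinear_map_right_zero: "bilinear_map B \<Longrightarrow> B a 0 = 0"
  using bilinear_mapD(4)[of B a 0 0] by simp

definition word_eval :: "('b \<Rightarrow> 'b \<Rightarrow> 'b) \<Rightarrow> 'b list \<Rightarrow> 'b" where
  "word_eval B v = (if length v = 2 then B (v ! 0) (v ! 1) else 0)"

lemma length_two_split_cases:
  obtains "length u + length w \<noteq> 1" | "u = []" "length w = 1" | "length u = 1" "w = []"
  using add_is_1 by fastforce

lemma word_eval_add:
  "bilinear_map B \<Longrightarrow>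
    word_eval B (u @ (a + b) # w) = word_eval B (u @ a # w) + word_eval B (u @ b # w)"
  by (cases u w rule: length_two_split_cases)
    (auto simp: word_eval_def bilinear_mapD nth_append length_Suc_conv)

lemma word_eval_scale:
  "bilinear_map B \<Longrightarrow> word_eval B (u @ c *s a # w) = c *s word_eval B (u @ a # w)"
  by (cases u w rule: length_two_split_cases)
    (auto simp: word_eval_def bilinear_mapD nth_append length_Suc_conv)

definition coeff_eval :: "('b \<Rightarrow> 'b \<Rightarrow> 'b) \<Rightarrow> ('b list \<Rightarrow> 'a) \<Rightarrow> 'b" where
  "coeff_eval B g = (\<Sum>v\<in>{v. g v \<noteq> 0}. g v *s word_eval B v)"

lemma coeff_eval_superset:
  "finite A \<Longrightarrow> {v. g v \<noteq> 0} \<subseteq> A \<Longrightarrow> coeff_eval B g = (\<Sum>v\<in>A. g v *s word_eval B v)"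
  unfolding coeff_eval_def by (rule sum.mono_neutral_left) (auto intro: finite_subset)

lemma coeff_eval_add:
  assumes "finite {v. f v \<noteq> 0}" and "finite {v. g v \<noteq> 0}"
  shows "coeff_eval B (\<lambda>v. f v + g v) = coeff_eval B f + coeff_eval B g"
proof -
  let ?A = "{v. f v \<noteq> 0} \<union> {v. g v \<noteq> 0}"
  have "finite ?A" using assms by simp
  then show ?thesis
    by (subst (1 2 3) coeff_eval_superset[where A = ?A]) (auto simp: scale_left_distrib sum.distrib)
qed

lemma coeff_eval_smult: "coeff_eval B (\<lambda>v. c * g v) = c *s coeff_eval B g"
proof (cases "c = 0")
  case False
  then show ?thesis by (simp add: coeff_eval_def scale_sum_right)
qed (simp add: coeff_eval_def)

lemma coeff_eval_tdelta: "coeff_eval B (tdelta w) = word_eval B w"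
  by (subst coeff_eval_superset[where A = "{w}"]) (auto simp: tdelta_def)

lemma finite_support_tdelta: "finite {v. tdelta w v \<noteq> (0::'a)}"
  by (rule finite_subset[of _ "{w}"]) (auto simp: tdelta_def)

lemma finite_support_tnull: "g \<in> tnull scale \<Longrightarrow> finite {v. g v \<noteq> 0}"
proof (induction rule: tnull.induct)
  case (tnull_add f g)
  then show ?case by (auto intro: finite_subset[of _ "{v. f v \<noteq> 0} \<union> {v. g v \<noteq> 0}"])
next
  case (tnull_smult f c)
  then show ?case by (auto intro: finite_subset[of _ "{v. f v \<noteq> 0}"])
next
  case (tnull_additive u a b w)
  show ?case
    by (rule finite_subset[of _ "{u @ (a + b) # w, u @ a # w, u @ b # w}"]) (auto simp: tdelta_def)
next
  case (tnull_homog u c a w)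
  show ?case
    by (rule finite_subset[of _ "{u @ c *s a # w, u @ a # w}"]) (auto simp: tdelta_def)
qed simp

lemma finite_support_diff:
  "finite {v. f v \<noteq> 0} \<Longrightarrow> finite {v. g v \<noteq> 0} \<Longrightarrow> finite {v. f v - g v \<noteq> (0::'a)}"
  by (auto intro: finite_subset[of _ "{v. f v \<noteq> 0} \<union> {v. g v \<noteq> 0}"])

lemma coeff_eval_diff:
  assumes "finite {v. f v \<noteq> 0}" and "finite {v. g v \<noteq> 0}"
  shows "coeff_eval B (\<lambda>v. f v - g v) = coeff_eval B f - coeff_eval B g"
  using coeff_eval_add[of f "\<lambda>v. - 1 * g v" B] coeff_eval_smult[of B "- 1" g] assms
  by (simp add: scale_minus_left)

text \<open>The universal property of the tensor square: a bilinear map kills every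
  multilinearity relation.\<close>

lemma coeff_eval_tnull:
  assumes "bilinear_map B"
  shows "g \<in> tnull scale \<Longrightarrow> coeff_eval B g = 0"
proof (induction rule: tnull.induct)
  case (tnull_add f g)
  then show ?case by (simp add: coeff_eval_add finite_support_tnull)
next
  case (tnull_additive u a b w)
  have "coeff_eval B (\<lambda>v. tdelta (u @ (a + b) # w) v - tdelta (u @ a # w) v - tdelta (u @ b # w) v)
    = word_eval B (u @ (a + b) # w) - word_eval B (u @ a # w) - word_eval B (u @ b # w)"
    by (simp add: coeff_eval_diff[OF finite_support_diff[OF finite_support_tdelta finite_support_tdelta]
        finite_support_tdelta] coeff_eval_diff[OF finite_support_tdelta finite_support_tdelta]
        coeff_eval_tdelta)
  then show ?case using word_eval_add[OF assms, of u a b w] by simp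
next
  case (tnull_homog u c a w)
  then show ?case
    using word_eval_scale[OF assms, of u c a w]
    by (simp add: coeff_eval_diff[OF finite_support_tdelta] coeff_eval_smult coeff_eval_tdelta
        finite_support_tdelta)
next
  case (tnull_smult f c)
  then show ?case by (simp add: coeff_eval_smult)
qed (simp add: coeff_eval_def)

lemma formal_sum_Cons: "formal_sum (w # ws) = (\<lambda>v. tdelta w v + formal_sum ws v)"
  by (simp add: formal_sum_def)

lemma formal_sum_outside: "v \<notin> set ws \<Longrightarrow> formal_sum ws v = (0::'a)"
  by (induction ws) (auto simp: formal_sum_def tdelta_def)

lemma finite_support_formal_sum: "finite {v. formal_sum ws v \<noteq> (0::'a)}"
  by (rule finite_subset[of _ "set ws"]) (auto intro: formal_sum_outside ccontr)

lemma coeff_eval_formal_sum: "coeff_eval B (formal_sum ws) = (\<Sum>w\<leftarrow>ws. word_eval B w)"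
proof (induction ws)
  case Nil
  then show ?case by (simp add: formal_sum_def coeff_eval_def)
next
  case (Cons w ws)
  then show ?case
    by (simp add: formal_sum_Cons coeff_eval_add finite_support_tdelta finite_support_formal_sum
        coeff_eval_tdelta)
qed

lemma word_eval_sum_tensor_eq:
  assumes "tensor_eq scale ws ws'" and "bilinear_map B"
  shows "(\<Sum>w\<leftarrow>ws. word_eval B w) = (\<Sum>w\<leftarrow>ws'. word_eval B w)"
  using coeff_eval_tnull[OF assms(2) assms(1)[unfolded tensor_eq_def]]
  by (simp add: coeff_eval_diff finite_support_formal_sum coeff_eval_formal_sum)

lemma pair_sum_tensor_eq:
  assumes "tensor_eq scale (pairs2 xs) (pairs2 ys)" and "bilinear_map B"
  shows "(\<Sum>(a, b)\<leftarrow>xs. B a b) = (\<Sum>(a, b)\<leftarrow>ys. B a b)"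
proof -
  have "(\<Sum>w\<leftarrow>pairs2 zs. word_eval B w) = (\<Sum>(a, b)\<leftarrow>zs. B a b)" for zs
    by (induction zs) (auto simp: pairs2_def word_eval_def)
  then show ?thesis using word_eval_sum_tensor_eq[OF assms] by simp
qed

end

lemma sum_list_map_partition:
  "(\<Sum>x\<leftarrow>xs. f x) = (\<Sum>x\<leftarrow>filter P xs. f x) + (\<Sum>x\<leftarrow>filter (\<lambda>x. \<not> P x) xs. f x)"
  for f :: "'a \<Rightarrow> 'b::ab_group_add"
  by (induction xs) (auto simp: algebra_simps)

lemma sum_lessThan_eventually_zero:
  assumes "\<forall>n\<ge>N. f n = 0" and "N \<le> (M::nat)"
  shows "sum f {..<M} = sum f {..<N}"
  using assms by (intro sum.mono_neutral_right) (auto simp: not_less)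

locale connected_graded_left_bialgebra =
  fixes sc :: "'k::field \<Rightarrow> 'h::comm_ring_1 \<Rightarrow> 'h"
    and \<Delta> :: "'h \<Rightarrow> ('h \<times> 'h) list"
    and \<epsilon> :: "'h \<Rightarrow> 'k"
    and Hn :: "nat \<Rightarrow> 'h set"
  assumes bialgebra: "left_counital_bialgebra sc \<Delta> \<epsilon>"
    and connected_graded: "connected_graded_bialgebra sc \<Delta> \<epsilon> Hn"
begin

sublocale word_evaluation sc
  using bialgebra by (simp add: left_counital_bialgebra_def word_evaluation_def)

interpretation pair: vector_space_pair sc sc ..

lemma scale_mult_left: "sc c (x * y) = sc c x * y"
  and scale_mult_right: "sc c (x * y) = x * sc c y"
  and counit_add: "\<epsilon> (x + y) = \<epsilon> x + \<epsilon> y"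
  and counit_scale: "\<epsilon> (sc c x) = c * \<epsilon> x"
  and counit_one: "\<epsilon> 1 = 1"
  and coproduct_add: "tensor_eq sc (pairs2 (\<Delta> (x + y))) (pairs2 (\<Delta> x @ \<Delta> y))"
  and coproduct_scale:
    "tensor_eq sc (pairs2 (\<Delta> (sc c x))) (pairs2 (map (\<lambda>(a, b). (sc c a, b)) (\<Delta> x)))"
  and coproduct_one: "tensor_eq sc (pairs2 (\<Delta> 1)) (pairs2 [(1, 1)])"
  and left_counit: "(\<Sum>(a, b)\<leftarrow>\<Delta> x. sc (\<epsilon> a) b) = x"
  using bialgebra unfolding left_counital_bialgebra_def by auto

lemma subspace_Hn: "subspace (Hn n)"
  and homogeneous_decomposition:
    "\<exists>!f. (\<forall>n. f n \<in> Hn n) \<and> (\<exists>N. (\<forall>n\<ge>N. f n = 0) \<and> x = sum f {..<N})"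
  and coproduct_homogeneous: "x \<in> Hn n \<Longrightarrow>
    \<exists>ys. tensor_eq sc (pairs2 (\<Delta> x)) (pairs2 ys)
      \<and> (\<forall>(a, b) \<in> set ys. (a \<in> Hn 0 \<and> b \<in> Hn n)
            \<or> (\<exists>p q. 0 < p \<and> 0 < q \<and> p + q = n \<and> a \<in> Hn p \<and> b \<in> Hn q))"
  and Hn_zero: "Hn 0 = range (\<lambda>c. sc c 1)"
  and counit_kernel: "{x. \<epsilon> x = 0} = {x. \<exists>N f. (\<forall>n. f n \<in> Hn (Suc n)) \<and> x = sum f {..<N}}"
  using connected_graded unfolding connected_graded_bialgebra_def graded_bialgebra_def by auto

lemma linear_scI:
  "(\<And>x y. f (x + y) = f x + f y) \<Longrightarrow> (\<And>c x. f (sc c x) = sc c (f x)) \<Longrightarrow> Vector_Spaces.linear sc sc f"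
  by (simp add: Vector_Spaces.linear_iff vector_space_axioms)

lemma counit_zero: "\<epsilon> 0 = 0"
  using counit_scale[of 0 0] by simp

lemma counit_sum: "\<epsilon> (sum f A) = (\<Sum>a\<in>A. \<epsilon> (f a))"
  by (induction A rule: infinite_finite_induct) (auto simp: counit_zero counit_add)

lemma bilinear_map_mult_linear: "Vector_Spaces.linear sc sc f \<Longrightarrow> bilinear_map (\<lambda>a b. a * f b)"
  by (auto simp: bilinear_map_def pair.linear_add pair.linear_scale algebra_simps
      scale_mult_left[symmetric] scale_mult_right[symmetric])

lemma bilinear_map_counit_scale: "bilinear_map (\<lambda>a b. sc (\<epsilon> a) b)"
  by (auto simp: bilinear_map_def counit_add counit_scale scale_left_distrib scale_right_distrib
      mult.commute)

definition coproduct_eval :: "('h \<Rightarrow> 'h \<Rightarrow> 'h) \<Rightarrow> 'h \<Rightarrow> 'h" where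
  "coproduct_eval B x = (\<Sum>(a, b)\<leftarrow>\<Delta> x. B a b)"

lemma linear_coproduct_eval: "bilinear_map B \<Longrightarrow> Vector_Spaces.linear sc sc (coproduct_eval B)"
proof (rule linear_scI)
  assume B: "bilinear_map B"
  have "(\<Sum>(a, b)\<leftarrow>map (\<lambda>(a, b). (sc c a, b)) xs. B a b) = sc c (\<Sum>(a, b)\<leftarrow>xs. B a b)" for c xs
    by (induction xs) (auto simp: bilinear_mapD[OF B] scale_right_distrib)
  then show "coproduct_eval B (sc c x) = sc c (coproduct_eval B x)" for c x
    using pair_sum_tensor_eq[OF coproduct_scale B] by (simp add: coproduct_eval_def)
  show "coproduct_eval B (x + y) = coproduct_eval B x + coproduct_eval B y" for x y
    using pair_sum_tensor_eq[OF coproduct_add B] by (simp add: coproduct_eval_def)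
qed

lemma coproduct_eval_one: "bilinear_map B \<Longrightarrow> coproduct_eval B 1 = B 1 1"
  using pair_sum_tensor_eq[OF coproduct_one] by (simp add: coproduct_eval_def)

lemma coproduct_eval_cong:
  "(\<And>a b. (a, b) \<in> set (\<Delta> x) \<Longrightarrow> B a b = B' a b) \<Longrightarrow> coproduct_eval B x = coproduct_eval B' x"
  unfolding coproduct_eval_def by (rule arg_cong[of _ _ sum_list], rule map_cong) auto

definition hcomp :: "'h \<Rightarrow> nat \<Rightarrow> 'h" where
  "hcomp x = (THE f. (\<forall>n. f n \<in> Hn n) \<and> (\<exists>N. (\<forall>n\<ge>N. f n = 0) \<and> x = sum f {..<N}))"

lemma hcomp_decomposition:
  "(\<forall>n. hcomp x n \<in> Hn n) \<and> (\<exists>N. (\<forall>n\<ge>N. hcomp x n = 0) \<and> x = sum (hcomp x) {..<N})"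
  unfolding hcomp_def by (rule theI'[OF homogeneous_decomposition])

lemma hcomp_in_Hn: "hcomp x n \<in> Hn n"
  using hcomp_decomposition by blast

lemma hcomp_unique:
  "(\<And>n. f n \<in> Hn n) \<Longrightarrow> (\<And>n. N \<le> n \<Longrightarrow> f n = 0) \<Longrightarrow> x = sum f {..<N} \<Longrightarrow> hcomp x = f"
  unfolding hcomp_def by (rule the1_equality[OF homogeneous_decomposition]) auto

lemma hcomp_eventually_zero:
  "\<forall>\<^sub>F N in sequentially. (\<forall>n\<ge>N. hcomp x n = 0) \<and> sum (hcomp x) {..<N} = x"
proof -
  obtain N where N: "\<forall>n\<ge>N. hcomp x n = 0" "x = sum (hcomp x) {..<N}"
    using hcomp_decomposition by blast
  have "(\<forall>n\<ge>M. hcomp x n = 0) \<and> sum (hcomp x) {..<M} = x" if "N \<le> M" for M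
    using that N(1) sum_lessThan_eventually_zero[OF N(1) that] N(2)[symmetric] by simp
  then show ?thesis by (auto simp: eventually_sequentially)
qed

lemma zero_in_Hn: "0 \<in> Hn n"
  using subspace_0[OF subspace_Hn] .

lemma linear_hcomp: "Vector_Spaces.linear sc sc (\<lambda>x. hcomp x n)"
proof (rule linear_scI)
  fix x y
  obtain N where x: "\<forall>n\<ge>N. hcomp x n = 0" "sum (hcomp x) {..<N} = x"
    and y: "\<forall>n\<ge>N. hcomp y n = 0" "sum (hcomp y) {..<N} = y"
    using eventually_happens'[OF sequentially_bot
        eventually_conj[OF hcomp_eventually_zero hcomp_eventually_zero]] by blast
  have "hcomp (x + y) = (\<lambda>n. hcomp x n + hcomp y n)"
  proof (rule hcomp_unique[of _ N])
    show "x + y = (\<Sum>n<N. hcomp x n + hcomp y n)"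
      by (simp add: sum.distrib x(2) y(2))
  qed (simp_all add: subspace_add[OF subspace_Hn] hcomp_in_Hn x(1) y(1))
  then show "hcomp (x + y) n = hcomp x n + hcomp y n" by simp
next
  fix c x
  obtain N where x: "\<forall>n\<ge>N. hcomp x n = 0" "sum (hcomp x) {..<N} = x"
    using eventually_happens'[OF sequentially_bot hcomp_eventually_zero] by blast
  have "hcomp (sc c x) = (\<lambda>n. sc c (hcomp x n))"
  proof (rule hcomp_unique[of _ N])
    show "sc c x = (\<Sum>n<N. sc c (hcomp x n))"
      by (simp add: scale_sum_right[symmetric] x(2))
  qed (simp_all add: subspace_scale[OF subspace_Hn] hcomp_in_Hn x(1))
  then show "hcomp (sc c x) n = sc c (hcomp x n)" by simp
qed

lemma hcomp_homogeneous: "y \<in> Hn j \<Longrightarrow> hcomp y = (\<lambda>n. if n = j then y else 0)"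
  by (rule hcomp_unique[of _ "Suc j"]) (auto simp: zero_in_Hn)

lemma counit_positive_degree:
  assumes "a \<in> Hn p" and "0 < p"
  shows "\<epsilon> a = 0"
proof -
  define f where "f n = (if n = p - 1 then a else 0)" for n
  have "\<forall>n. f n \<in> Hn (Suc n)" and "a = sum f {..<p}"
    using assms zero_in_Hn by (auto simp: f_def)
  then have "a \<in> {x. \<exists>N f. (\<forall>n. f n \<in> Hn (Suc n)) \<and> x = sum f {..<N}}"
    by blast
  then show ?thesis
    by (simp only: counit_kernel[symmetric] mem_Collect_eq)
qed

lemma degree_zero_scalar: "a \<in> Hn 0 \<Longrightarrow> a = sc (\<epsilon> a) 1"
  using Hn_zero by (auto simp: counit_scale counit_one)

lemma one_in_Hn_zero: "1 \<in> Hn 0"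
  using Hn_zero by (metis scale_one rangeI)

lemma pair_sum_degree_zero_left:
  assumes B: "bilinear_map B" and zs: "\<forall>(a, b)\<in>set zs. a \<in> Hn 0"
  shows "(\<Sum>(a, b)\<leftarrow>zs. B a b) = B 1 (\<Sum>(a, b)\<leftarrow>zs. sc (\<epsilon> a) b)"
  using zs
proof (induction zs)
  case Nil
  then show ?case by (simp add: bilinear_map_right_zero[OF B])
next
  case (Cons z zs)
  obtain a b where z: "z = (a, b)" by fastforce
  then have "a \<in> Hn 0" using Cons.prems by simp
  then have "B a b = B (sc (\<epsilon> a) 1) b"
    by (metis degree_zero_scalar)
  then show ?case
    using Cons z by (simp add: bilinear_mapD[OF B])
qed

lemma reduced_coproduct_exists:
  assumes y: "y \<in> Hn j" and j: "0 < j"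
  shows "\<exists>ys. (\<forall>B. bilinear_map B \<longrightarrow> coproduct_eval B y = B 1 y + (\<Sum>(a, b)\<leftarrow>ys. B a b))
    \<and> (\<forall>(a, b)\<in>set ys. \<exists>q<j. b \<in> Hn q)"
proof -
  obtain ys0 where t: "tensor_eq sc (pairs2 (\<Delta> y)) (pairs2 ys0)"
    and deg: "\<forall>(a, b) \<in> set ys0. (a \<in> Hn 0 \<and> b \<in> Hn j)
                 \<or> (\<exists>p q. 0 < p \<and> 0 < q \<and> p + q = j \<and> a \<in> Hn p \<and> b \<in> Hn q)"
    using coproduct_homogeneous[OF y] by blast
  define P where "P = (\<lambda>(a, b). a \<in> Hn 0 \<and> b \<in> Hn j)"
  define zs where "zs = filter P ys0"
  define ys where "ys = filter (\<lambda>ab. \<not> P ab) ys0"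
  have zs_deg: "\<forall>(a, b)\<in>set zs. a \<in> Hn 0"
    by (auto simp: zs_def P_def)
  have mixed: "\<epsilon> a = 0 \<and> (\<exists>q<j. b \<in> Hn q)" if mem: "(a, b) \<in> set ys0" and not_P: "\<not> P (a, b)" for a b
  proof -
    have "(a \<in> Hn 0 \<and> b \<in> Hn j) \<or> (\<exists>p q. 0 < p \<and> 0 < q \<and> p + q = j \<and> a \<in> Hn p \<and> b \<in> Hn q)"
      using deg mem by fast
    then obtain p q where "0 < p" "p + q = j" "a \<in> Hn p" "b \<in> Hn q"
      using not_P by (auto simp: P_def)
    then show ?thesis
      using counit_positive_degree by (auto intro!: exI[of _ q])
  qed
  have split: "coproduct_eval B y = (\<Sum>(a, b)\<leftarrow>zs. B a b) + (\<Sum>(a, b)\<leftarrow>ys. B a b)"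
    if "bilinear_map B" for B
    using pair_sum_tensor_eq[OF t that] sum_list_map_partition[of "\<lambda>(a, b). B a b" ys0 P]
    by (simp add: coproduct_eval_def zs_def ys_def)
  have "y = (\<Sum>(a, b)\<leftarrow>ys0. sc (\<epsilon> a) b)"
    using left_counit[of y] pair_sum_tensor_eq[OF t bilinear_map_counit_scale] by simp
  also have "\<dots> = (\<Sum>(a, b)\<leftarrow>zs. sc (\<epsilon> a) b)"
    unfolding zs_def by (rule sum_list_map_filter[symmetric]) (auto dest: mixed)
  finally have "coproduct_eval B y = B 1 y + (\<Sum>(a, b)\<leftarrow>ys. B a b)" if "bilinear_map B" for B
    using split[OF that] pair_sum_degree_zero_left[OF that zs_deg] by simp
  moreover have "\<forall>(a, b)\<in>set ys. \<exists>q<j. b \<in> Hn q"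
    by (auto simp: ys_def dest: mixed)
  ultimately show ?thesis by blast
qed

definition reduced_coproduct :: "nat \<Rightarrow> 'h \<Rightarrow> ('h \<times> 'h) list" where
  "reduced_coproduct j y = (SOME ys.
     (\<forall>B. bilinear_map B \<longrightarrow> coproduct_eval B y = B 1 y + (\<Sum>(a, b)\<leftarrow>ys. B a b))
     \<and> (\<forall>(a, b)\<in>set ys. \<exists>q<j. b \<in> Hn q))"

lemma reduced_coproduct:
  assumes "y \<in> Hn j" and "0 < j"
  shows coproduct_eval_reduced: "bilinear_map B \<Longrightarrow>
      coproduct_eval B y = B 1 y + (\<Sum>(a, b)\<leftarrow>reduced_coproduct j y. B a b)"
    and reduced_coproduct_lower_degree:
      "(a, b) \<in> set (reduced_coproduct j y) \<Longrightarrow> \<exists>q<j. b \<in> Hn q"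
  using someI_ex[OF reduced_coproduct_exists[OF assms]] unfolding reduced_coproduct_def[symmetric]
  by auto

definition reduced_convolution :: "('h \<Rightarrow> 'h) \<Rightarrow> nat \<Rightarrow> 'h \<Rightarrow> 'h" where
  "reduced_convolution f j y = (\<Sum>(a, b)\<leftarrow>reduced_coproduct j y. a * f b)"

lemma reduced_convolution_cong:
  "(\<And>a b. (a, b) \<in> set (reduced_coproduct j y) \<Longrightarrow> f b = g b) \<Longrightarrow>
    reduced_convolution f j y = reduced_convolution g j y"
  unfolding reduced_convolution_def by (rule arg_cong[of _ _ sum_list], rule map_cong) auto

lemma coproduct_eval_mult_reduced:
  assumes "Vector_Spaces.linear sc sc f" and "y \<in> Hn j" and "0 < j"
  shows "coproduct_eval (\<lambda>a b. a * f b) y = f y + reduced_convolution f j y"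
  using coproduct_eval_reduced[OF assms(2,3) bilinear_map_mult_linear[OF assms(1)]]
  by (simp add: reduced_convolution_def)

lemma linear_reduced_convolution_hcomp:
  assumes f: "Vector_Spaces.linear sc sc f" and j: "0 < j"
  shows "Vector_Spaces.linear sc sc (\<lambda>x. reduced_convolution f j (hcomp x j))"
proof -
  have "(\<lambda>x. reduced_convolution f j (hcomp x j))
      = (\<lambda>x. coproduct_eval (\<lambda>a b. a * f b) (hcomp x j) - f (hcomp x j))"
    using coproduct_eval_mult_reduced[OF f hcomp_in_Hn j] by simp
  moreover have "Vector_Spaces.linear sc sc
      (\<lambda>x. coproduct_eval (\<lambda>a b. a * f b) (hcomp x j) - f (hcomp x j))"
    using pair.linear_compose_sub[OF
        Vector_Spaces.linear_compose[OF linear_hcomp linear_coproduct_eval[OF bilinear_map_mult_linear[OF f]]]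
        Vector_Spaces.linear_compose[OF linear_hcomp f]]
    by (simp add: o_def)
  ultimately show ?thesis by simp
qed

lemma reduced_convolution_zero:
  "Vector_Spaces.linear sc sc f \<Longrightarrow> 0 < j \<Longrightarrow> reduced_convolution f j 0 = 0"
  using pair.linear_0[OF linear_reduced_convolution_hcomp, of f j]
    pair.linear_0[OF linear_hcomp, of j] by simp

text \<open>\<open>antipode_upto n\<close> is the antipode on degrees \<open>\<le> n\<close> and vanishes on higher degrees;
  step \<open>n + 1\<close> applies the recursion \<open>S y = - \<Sum> y' S(y'')\<close> to the degree \<open>n + 1\<close> component.\<close>

primrec antipode_upto :: "nat \<Rightarrow> 'h \<Rightarrow> 'h" where
  "antipode_upto 0 x = sc (\<epsilon> x) 1"
| "antipode_upto (Suc n) x =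
     antipode_upto n x - reduced_convolution (antipode_upto n) (Suc n) (hcomp x (Suc n))"

lemma linear_antipode_upto: "Vector_Spaces.linear sc sc (antipode_upto n)"
proof (induction n)
  case 0
  show ?case
    by (rule linear_scI) (simp_all add: counit_add counit_scale scale_left_distrib)
next
  case (Suc n)
  then show ?case
    unfolding antipode_upto.simps
    by (intro pair.linear_compose_sub[OF Suc linear_reduced_convolution_hcomp[OF Suc]]) simp
qed

lemma antipode_upto_above: "y \<in> Hn k \<Longrightarrow> n < k \<Longrightarrow> antipode_upto n y = 0"
proof (induction n)
  case 0
  then show ?case by (simp add: counit_positive_degree)
next
  case (Suc n)
  then show ?case
    by (simp add: hcomp_homogeneous reduced_convolution_zero[OF linear_antipode_upto])
qed

lemma antipode_upto_stable:
  assumes "\<forall>n>m. hcomp x n = 0" and "m \<le> k"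
  shows "antipode_upto k x = antipode_upto m x"
  using assms(2)
proof (induction k rule: dec_induct)
  case (step n)
  then show ?case
    using assms(1) by (simp add: reduced_convolution_zero[OF linear_antipode_upto])
qed simp

lemma antipode_upto_homogeneous: "y \<in> Hn j \<Longrightarrow> j \<le> k \<Longrightarrow> antipode_upto k y = antipode_upto j y"
  by (rule antipode_upto_stable) (auto simp: hcomp_homogeneous)

definition antipode :: "'h \<Rightarrow> 'h" where
  "antipode x = antipode_upto (SOME m. \<forall>n>m. hcomp x n = 0) x"

lemma antipode_eventually: "\<forall>\<^sub>F k in sequentially. antipode x = antipode_upto k x"
proof -
  let ?m = "SOME m. \<forall>n>m. hcomp x n = 0"
  have "\<exists>m. \<forall>n>m. hcomp x n = 0"
    using hcomp_decomposition by (meson less_imp_le)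
  then have m: "\<forall>n>?m. hcomp x n = 0"
    by (rule someI_ex)
  have "antipode x = antipode_upto k x" if "?m \<le> k" for k
    unfolding antipode_def using antipode_upto_stable[OF m that] by simp
  then show ?thesis
    by (auto simp: eventually_sequentially)
qed

lemma linear_antipode: "Vector_Spaces.linear sc sc antipode"
proof (rule linear_scI)
  fix x y
  obtain k where "antipode (x + y) = antipode_upto k (x + y)"
    and "antipode x = antipode_upto k x" and "antipode y = antipode_upto k y"
    using eventually_happens'[OF sequentially_bot eventually_conj[OF antipode_eventually
          eventually_conj[OF antipode_eventually antipode_eventually]]] by blast
  then show "antipode (x + y) = antipode x + antipode y"
    by (simp add: pair.linear_add[OF linear_antipode_upto])
next
  fix c x
  obtain k where "antipode (sc c x) = antipode_upto k (sc c x)" and "antipode x = antipode_upto k x"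
    using eventually_happens'[OF sequentially_bot
        eventually_conj[OF antipode_eventually antipode_eventually]] by blast
  then show "antipode (sc c x) = sc c (antipode x)"
    by (simp add: pair.linear_scale[OF linear_antipode_upto])
qed

lemma coproduct_eval_antipode_upto_homogeneous:
  assumes y: "y \<in> Hn j" and jk: "j \<le> k"
  shows "coproduct_eval (\<lambda>a b. a * antipode_upto k b) y = sc (\<epsilon> y) 1"
proof (cases j)
  case 0
  have B: "bilinear_map (\<lambda>a b. a * antipode_upto k b)"
    by (rule bilinear_map_mult_linear[OF linear_antipode_upto])
  have "antipode_upto k 1 = antipode_upto 0 1"
    using antipode_upto_homogeneous[OF one_in_Hn_zero] by simp
  then have "coproduct_eval (\<lambda>a b. a * antipode_upto k b) 1 = 1"
    by (simp add: coproduct_eval_one[OF B] counit_one)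
  moreover have "y = sc (\<epsilon> y) 1"
    using degree_zero_scalar y 0 by blast
  ultimately show ?thesis
    by (metis pair.linear_scale[OF linear_coproduct_eval[OF B]])
next
  case (Suc i)
  have "coproduct_eval (\<lambda>a b. a * antipode_upto k b) y
      = antipode_upto k y + reduced_convolution (antipode_upto k) j y"
    by (rule coproduct_eval_mult_reduced[OF linear_antipode_upto y]) (simp add: Suc)
  also have "antipode_upto k y = antipode_upto j y"
    by (rule antipode_upto_homogeneous[OF y jk])
  also have "antipode_upto j y = - reduced_convolution (antipode_upto i) j y"
    using Suc antipode_upto_above[OF y, of i] by (simp add: hcomp_homogeneous[OF y])
  also have "reduced_convolution (antipode_upto k) j y = reduced_convolution (antipode_upto i) j y"
  proof (rule reduced_convolution_cong)
    fix a b assume "(a, b) \<in> set (reduced_coproduct j y)"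
    then obtain q where "q < j" and "b \<in> Hn q"
      using reduced_coproduct_lower_degree[OF y] Suc by blast
    then show "antipode_upto k b = antipode_upto i b"
      using Suc jk antipode_upto_homogeneous[of b q k] antipode_upto_homogeneous[of b q i] by simp
  qed
  finally show ?thesis
    using counit_positive_degree[OF y] Suc by simp
qed

lemma coproduct_eval_antipode: "coproduct_eval (\<lambda>a b. a * antipode b) x = sc (\<epsilon> x) 1"
proof -
  have "\<forall>\<^sub>F k in sequentially. \<forall>ab\<in>set (\<Delta> x). antipode (snd ab) = antipode_upto k (snd ab)"
    by (rule eventually_ball_finite) (simp_all add: antipode_eventually)
  then obtain k where k: "\<forall>ab\<in>set (\<Delta> x). antipode (snd ab) = antipode_upto k (snd ab)"
    and x: "sum (hcomp x) {..<k} = x"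
    using eventually_happens'[OF sequentially_bot eventually_conj[OF _ hcomp_eventually_zero]]
    by blast
  let ?B = "\<lambda>a b. a * antipode_upto k b"
  have "coproduct_eval (\<lambda>a b. a * antipode b) x = coproduct_eval ?B x"
    using k by (intro coproduct_eval_cong) force
  also have "\<dots> = (\<Sum>j<k. coproduct_eval ?B (hcomp x j))"
    by (subst (1) x[symmetric])
      (rule pair.linear_sum[OF linear_coproduct_eval[OF bilinear_map_mult_linear[OF linear_antipode_upto]]])
  also have "\<dots> = (\<Sum>j<k. sc (\<epsilon> (hcomp x j)) 1)"
    by (rule sum.cong[OF refl], rule coproduct_eval_antipode_upto_homogeneous[OF hcomp_in_Hn]) simp
  also have "\<dots> = sc (\<epsilon> x) 1"
    using counit_sum[of "hcomp x" "{..<k}"] by (simp add: x scale_sum_left)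
  finally show ?thesis .
qed

lemma convolution_id_antipode: "convolution \<Delta> id antipode x = sc (\<epsilon> x) 1"
  using coproduct_eval_antipode by (simp add: convolution_def coproduct_eval_def)

lemma antipode_one: "antipode 1 = 1"
  using coproduct_eval_antipode[of 1] coproduct_eval_one[OF bilinear_map_mult_linear[OF linear_antipode]]
  by (simp add: counit_one)

lemma antipode_recursion:
  assumes "1 \<le> n" and "x \<in> Hn n" and "tensor_eq sc (pairs2 (\<Delta> x)) (pairs2 ((1, x) # ys))"
  shows "antipode x = - (\<Sum>(a, b)\<leftarrow>ys. a * antipode b)"
proof -
  have "sc (\<epsilon> x) 1 = antipode x + (\<Sum>(a, b)\<leftarrow>ys. a * antipode b)"
    using coproduct_eval_antipode[of x]
      pair_sum_tensor_eq[OF assms(3) bilinear_map_mult_linear[OF linear_antipode]]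
    by (simp add: coproduct_eval_def)
  moreover have "\<epsilon> x = 0"
    using counit_positive_degree assms(1,2) by simp
  ultimately show ?thesis
    by (simp add: eq_neg_iff_add_eq_0)
qed

end

theorem theorem4p6:
  fixes sc :: "'k::field \<Rightarrow> 'h::comm_ring_1 \<Rightarrow> 'h"
    and \<Delta> :: "'h \<Rightarrow> ('h \<times> 'h) list"
    and \<epsilon> :: "'h \<Rightarrow> 'k"
    and Hn :: "nat \<Rightarrow> 'h set"
  assumes "left_counital_bialgebra sc \<Delta> \<epsilon>"
    and "connected_graded_bialgebra sc \<Delta> \<epsilon> Hn"
  shows "\<exists>S. Vector_Spaces.linear sc sc S
           \<and> (\<forall>x. convolution \<Delta> id S x = sc (\<epsilon> x) 1)
           \<and> S 1 = 1
           \<and> (\<forall>n x ys. 1 \<le> n \<longrightarrow> x \<in> Hn n \<longrightarrow>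
                 tensor_eq sc (pairs2 (\<Delta> x)) (pairs2 ((1, x) # ys)) \<longrightarrow>
                 S x = - sum_list (map (\<lambda>(a, b). a * S b) ys))"
proof -
  interpret connected_graded_left_bialgebra sc \<Delta> \<epsilon> Hn
    using assms by (rule connected_graded_left_bialgebra.intro)
  show ?thesis
    using linear_antipode convolution_id_antipode antipode_one antipode_recursion by blast
qed

end
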